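(* Let $\lambda>1$, $\mu>1$. Then the system $$ \begin{cases} 2\,(a+\alpha)(3-a\alpha-a-\alpha)(3-a\alpha+a+\alpha)+(\lambda-\mu)(a-\alpha)^3=0,\\ (\lambda+\mu)^2(a-\alpha)^6=4\,(3+a\alpha)^3(1-a\alpha)(2+a+\alpha)(2-a-\alpha) \end{cases} $$ has at most one solution $(\alpha,a)$ with $-1<\alpha<a<1$. *)

theory Defs
  imports Complex_Main
begin

definition sys4p4 :: "real \<Rightarrow> real \<Rightarrow> real \<Rightarrow> real \<Rightarrow> bool" where
  "sys4p4 l m \<alpha> a \<longleftrightarrow>
     2 * (a + \<alpha>) * (3 - a*\<alpha> - a - \<alpha>) * (3 - a*\<alpha> + a + \<alpha>) + (l - m) * (a - \<alpha>)^3 = 0 \<and>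
     (l + m)^2 * (a - \<alpha>)^6 = 4 * (3 + a*\<alpha>)^3 * (1 - a*\<alpha>) * (2 + a + \<alpha>) * (2 - a - \<alpha>)"

end

theory Submission
  imports Defs
begin

text \<open>
  Up to the factor 4, the right-hand side of the second equation is
  \<open>Q(\<alpha>, a) = (3 + a\<alpha>)\<^sup>3 (1 - a\<alpha>) (4 - (a + \<alpha>)\<^sup>2)\<close>, and the first
  equation reads \<open>2 N(\<alpha>, a) = (\<mu> - \<lambda>) (a - \<alpha>)\<^sup>3\<close> with
  \<open>N(\<alpha>, a) = (a + \<alpha>) ((3 - a\<alpha>)\<^sup>2 - (a + \<alpha>)\<^sup>2)\<close>. Hence every solution in the
  triangle \<open>-1 < \<alpha> < a < 1\<close> satisfies \<open>U = (\<lambda> + \<mu>)\<^sup>2 / 4\<close> and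
  \<open>W = (\<mu> - \<lambda>) / (\<lambda> + \<mu>)\<close>, where \<open>U = Q / (a - \<alpha>)\<^sup>6\<close> and
  \<open>W = N / \<surd>Q\<close>. On the triangle \<open>U\<close> is increasing in \<open>\<alpha>\<close> and decreasing
  in \<open>a\<close>, while \<open>W\<close> is increasing in both variables; this makes \<open>(U, W)\<close>
  injective there. The reflection \<open>(\<alpha>, a) \<mapsto> (-a, -\<alpha>)\<close> of the triangle
  preserves \<open>Q\<close> and negates \<open>N\<close>, so monotonicity in \<open>a\<close> follows from
  monotonicity in \<open>\<alpha>\<close>. The sign of the \<open>\<alpha>\<close>-derivative is read off from
  its numerator, which after cancelling \<open>(3 + a\<alpha>)\<^sup>2\<close> becomes, in the
  barycentric coordinates \<open>1 + \<alpha>, a - \<alpha>, 1 - a\<close>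
  (summing to 2), a form with positive coefficients.
\<close>

definition Qpoly :: "real \<Rightarrow> real \<Rightarrow> real" where
  "Qpoly x c = (3 + x*c)^3 * (1 - x*c) * (4 - (x + c)^2)"

definition Npoly :: "real \<Rightarrow> real \<Rightarrow> real" where
  "Npoly x c = (x + c) * ((3 - x*c)^2 - (x + c)^2)"

definition Qpoly_dx :: "real \<Rightarrow> real \<Rightarrow> real" where
  "Qpoly_dx x c = (3 + x*c)^2 *
     (3*c*(1 - x*c)*(4 - (x + c)^2) - (3 + x*c)*c*(4 - (x + c)^2) - 2*(3 + x*c)*(1 - x*c)*(x + c))"

definition Npoly_dx :: "real \<Rightarrow> real \<Rightarrow> real" where
  "Npoly_dx x c = (3 - x*c)^2 - (x + c)^2 - 2*(x + c)*((3 - x*c)*c + x + c)"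

definition Uratio :: "real \<Rightarrow> real \<Rightarrow> real" where
  "Uratio x c = Qpoly x c / (c - x)^6"

definition Wratio :: "real \<Rightarrow> real \<Rightarrow> real" where
  "Wratio x c = Npoly x c / sqrt (Qpoly x c)"

lemma abs_mult_less_one:
  fixes x c :: real
  assumes "-1 < x" "x < 1" "-1 < c" "c < 1"
  shows "\<bar>x*c\<bar> < 1"
  using assms abs_mult_less[of x 1 c 1] by (simp add: abs_mult abs_less_iff)

lemma Qpoly_pos:
  assumes "-1 < x" "x < 1" "-1 < c" "c < 1"
  shows "0 < Qpoly x c"
proof -
  have "\<bar>x*c\<bar> < 1"
    using assms by (rule abs_mult_less_one)
  then have "0 < 3 + x*c" "0 < 1 - x*c" by linarith+
  moreover have "4 - (x + c)^2 = (2 - x - c) * (2 + x + c)"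
    by (simp add: power2_eq_square algebra_simps)
  then have "0 < 4 - (x + c)^2"
    using assms by simp
  ultimately show ?thesis
    unfolding Qpoly_def by simp
qed

lemma Qpoly_reflect: "Qpoly (-c) (-x) = Qpoly x c"
  unfolding Qpoly_def by algebra

lemma Npoly_reflect: "Npoly (-c) (-x) = - Npoly x c"
  unfolding Npoly_def by algebra

lemma Uratio_reflect: "Uratio (-c) (-x) = Uratio x c"
  unfolding Uratio_def by (simp add: Qpoly_reflect)

lemma Wratio_reflect: "Wratio (-c) (-x) = - Wratio x c"
  unfolding Wratio_def by (simp add: Qpoly_reflect Npoly_reflect)

lemma Qpoly_has_real_derivative: "((\<lambda>t. Qpoly t c) has_real_derivative Qpoly_dx x c) (at x)"
  unfolding Qpoly_def Qpoly_dx_def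
  by (auto intro!: derivative_eq_intros simp: algebra_simps power2_eq_square power3_eq_cube)

lemma Npoly_has_real_derivative: "((\<lambda>t. Npoly t c) has_real_derivative Npoly_dx x c) (at x)"
  unfolding Npoly_def Npoly_dx_def
  by (auto intro!: derivative_eq_intros simp: algebra_simps)

lemma Uratio_has_real_derivative:
  assumes "x \<noteq> c"
  shows "((\<lambda>t. Uratio t c) has_real_derivative
           (Qpoly_dx x c * (c - x) + 6 * Qpoly x c) / (c - x)^7) (at x)"
proof -
  have "((\<lambda>t. Qpoly t c / (c - t)^6) has_real_derivative
          (Qpoly_dx x c * (c - x)^6 - Qpoly x c * (- 6 * (c - x)^5)) / ((c - x)^6 * (c - x)^6)) (at x)"
    using assms
    by (intro DERIV_divide Qpoly_has_real_derivative) (auto intro!: derivative_eq_intros)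
  moreover have "(Qpoly_dx x c * (c - x)^6 - Qpoly x c * (- 6 * (c - x)^5)) / ((c - x)^6 * (c - x)^6)
      = (Qpoly_dx x c * (c - x) + 6 * Qpoly x c) / (c - x)^7"
  proof -
    have "Qpoly_dx x c * (c - x)^6 - Qpoly x c * (- 6 * (c - x)^5)
        = (c - x)^5 * (Qpoly_dx x c * (c - x) + 6 * Qpoly x c)"
      and "(c - x)^6 * (c - x)^6 = (c - x)^5 * (c - x)^7"
      by (simp_all add: algebra_simps eval_nat_numeral)
    then show ?thesis
      using assms by (simp only:) (rule nonzero_mult_divide_mult_cancel_left, simp)
  qed
  ultimately show ?thesis
    unfolding Uratio_def by simp
qed

lemma Wratio_has_real_derivative:
  assumes "0 < Qpoly x c"
  shows "((\<lambda>t. Wratio t c) has_real_derivative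
           (2 * Npoly_dx x c * Qpoly x c - Npoly x c * Qpoly_dx x c)
             / (2 * Qpoly x c * sqrt (Qpoly x c))) (at x)"
proof -
  have sqrt_Q: "((\<lambda>t. sqrt (Qpoly t c)) has_real_derivative
                  inverse (sqrt (Qpoly x c)) / 2 * Qpoly_dx x c) (at x)"
    by (rule DERIV_chain2[OF DERIV_real_sqrt[OF assms] Qpoly_has_real_derivative])
  have "((\<lambda>t. Npoly t c / sqrt (Qpoly t c)) has_real_derivative
          (Npoly_dx x c * sqrt (Qpoly x c) - Npoly x c * (inverse (sqrt (Qpoly x c)) / 2 * Qpoly_dx x c))
            / (sqrt (Qpoly x c) * sqrt (Qpoly x c))) (at x)"
    using assms by (intro DERIV_divide Npoly_has_real_derivative sqrt_Q) simp
  moreover have "(Npoly_dx x c * sqrt (Qpoly x c) - Npoly x c * (inverse (sqrt (Qpoly x c)) / 2 * Qpoly_dx x c))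
                   / (sqrt (Qpoly x c) * sqrt (Qpoly x c))
      = (2 * Npoly_dx x c * Qpoly x c - Npoly x c * Qpoly_dx x c) / (2 * Qpoly x c * sqrt (Qpoly x c))"
    using assms by (simp add: field_simps)
  ultimately show ?thesis
    unfolding Wratio_def by simp
qed

lemma Uratio_numerator_pos:
  assumes "-1 < \<alpha>" "\<alpha> < a" "a < 1"
  shows "0 < Qpoly_dx \<alpha> a * (a - \<alpha>) + 6 * Qpoly \<alpha> a"
proof -
  define x y z where "x = 1 + \<alpha>" and "y = a - \<alpha>" and "z = 1 - a"
  have "Qpoly_dx \<alpha> a * (a - \<alpha>) + 6 * Qpoly \<alpha> a = (3 + \<alpha>*a)^2 *
      (4*x^4*y^2 + 20*x^4*y*z + 24*x^4*z^2 + 14*x^3*y^3 + 68*x^3*y^2*z + 90*x^3*y*z^2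
       + 24*x^3*z^3 + 18*x^2*y^4 + 86*x^2*y^3*z + 130*x^2*y^2*z^2 + 78*x^2*y*z^3 + 24*x^2*z^4
       + 10*x*y^5 + 48*x*y^4*z + 84*x*y^3*z^2 + 72*x*y^2*z^3 + 28*x*y*z^4 + 2*y^6 + 10*y^5*z
       + 20*y^4*z^2 + 20*y^3*z^3 + 8*y^2*z^4)" (is "_ = _ * ?p")
    unfolding x_def y_def z_def Qpoly_dx_def Qpoly_def by algebra
  moreover have "0 < ?p"
    using assms by (intro add_pos_pos mult_pos_pos zero_less_power) (simp_all add: x_def y_def z_def)
  moreover have "0 < 3 + \<alpha>*a"
    using assms abs_mult_less_one[of \<alpha> a] by simp
  ultimately show ?thesis
    by simp
qed

lemma Wratio_numerator_pos:
  assumes "-1 < \<alpha>" "\<alpha> < a" "a < 1"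
  shows "0 < 2 * Npoly_dx \<alpha> a * Qpoly \<alpha> a - Npoly \<alpha> a * Qpoly_dx \<alpha> a"
proof -
  define x y z where "x = 1 + \<alpha>" and "y = a - \<alpha>" and "z = 1 - a"
  have "2 * Npoly_dx \<alpha> a * Qpoly \<alpha> a - Npoly \<alpha> a * Qpoly_dx \<alpha> a = (3 + \<alpha>*a)^2 *
      (4*x^4*y^4 + 52*x^4*y^3*z + 216*x^4*y^2*z^2 + 360*x^4*y*z^3 + 216*x^4*z^4
       + 14*x^3*y^5 + 164*x^3*y^4*z + 618*x^3*y^3*z^2 + 936*x^3*y^2*z^3 + 504*x^3*y*z^4
       + 18*x^2*y^6 + 190*x^2*y^5*z + 650*x^2*y^4*z^2 + 894*x^2*y^3*z^3 + 432*x^2*y^2*z^4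
       + 10*x*y^7 + 96*x*y^6*z + 300*x*y^5*z^2 + 376*x*y^4*z^3 + 164*x*y^3*z^4
       + 2*y^8 + 18*y^7*z + 52*y^6*z^2 + 60*y^5*z^3 + 24*y^4*z^4)" (is "_ = _ * ?p")
    unfolding x_def y_def z_def Qpoly_dx_def Qpoly_def Npoly_def Npoly_dx_def by algebra
  moreover have "0 < ?p"
    using assms by (intro add_pos_pos mult_pos_pos zero_less_power) (simp_all add: x_def y_def z_def)
  moreover have "0 < 3 + \<alpha>*a"
    using assms abs_mult_less_one[of \<alpha> a] by simp
  ultimately show ?thesis
    by simp
qed

lemma Uratio_strict_mono_first:
  assumes "-1 < \<alpha>1" "\<alpha>1 < \<alpha>2" "\<alpha>2 < a" "a < 1"
  shows "Uratio \<alpha>1 a < Uratio \<alpha>2 a"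
proof (rule DERIV_pos_imp_increasing[OF assms(2)])
  fix t
  assume "\<alpha>1 \<le> t" "t \<le> \<alpha>2"
  with assms have "-1 < t" "t < a" "a < 1"
    by simp_all
  then show "\<exists>D. ((\<lambda>t. Uratio t a) has_real_derivative D) (at t) \<and> 0 < D"
    using Uratio_has_real_derivative[of t a] Uratio_numerator_pos[of t a] by auto
qed

lemma Uratio_strict_antimono_second:
  assumes "-1 < \<alpha>" "\<alpha> < a1" "a1 < a2" "a2 < 1"
  shows "Uratio \<alpha> a2 < Uratio \<alpha> a1"
  using Uratio_strict_mono_first[of "-a2" "-a1" "-\<alpha>"] assms by (simp add: Uratio_reflect)

lemma Wratio_strict_mono_first:
  assumes "-1 < \<alpha>1" "\<alpha>1 < \<alpha>2" "\<alpha>2 < a" "a < 1"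
  shows "Wratio \<alpha>1 a < Wratio \<alpha>2 a"
proof (rule DERIV_pos_imp_increasing[OF assms(2)])
  fix t
  assume "\<alpha>1 \<le> t" "t \<le> \<alpha>2"
  with assms have "-1 < t" "t < a" "a < 1"
    by simp_all
  moreover from this have "0 < Qpoly t a"
    by (intro Qpoly_pos) simp_all
  ultimately show "\<exists>D. ((\<lambda>t. Wratio t a) has_real_derivative D) (at t) \<and> 0 < D"
    using Wratio_has_real_derivative[of t a] Wratio_numerator_pos[of t a] by auto
qed

lemma Wratio_strict_mono_second:
  assumes "-1 < \<alpha>" "\<alpha> < a1" "a1 < a2" "a2 < 1"
  shows "Wratio \<alpha> a1 < Wratio \<alpha> a2"
  using Wratio_strict_mono_first[of "-a2" "-a1" "-\<alpha>"] assms by (simp add: Wratio_reflect)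

lemma sys4p4_imp_ratios:
  assumes "0 < l + m" "\<alpha> < a" "sys4p4 l m \<alpha> a"
  shows "Uratio \<alpha> a = (l + m)^2 / 4" and "Wratio \<alpha> a = (m - l) / (l + m)"
proof -
  define d where "d = a - \<alpha>"
  have "0 < d"
    using assms(2) by (simp add: d_def)
  have "2 * Npoly \<alpha> a + (l - m) * d^3 = 0" and Q_eq: "(l + m)^2 * d^6 = 4 * Qpoly \<alpha> a"
    using assms(3) unfolding sys4p4_def Npoly_def Qpoly_def d_def by algebra+
  then have N_eq: "Npoly \<alpha> a = (m - l) * d^3 / 2"
    by (simp add: algebra_simps)
  show "Uratio \<alpha> a = (l + m)^2 / 4"
    unfolding Uratio_def d_def[symmetric] using Q_eq \<open>0 < d\<close> by (simp add: field_simps)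
  have "Qpoly \<alpha> a = ((l + m) * d^3 / 2)^2"
    using Q_eq by (simp add: power_mult_distrib power2_eq_square field_simps)
  moreover have "0 < (l + m) * d^3 / 2"
    using assms(1) \<open>0 < d\<close> by simp
  ultimately have sqrt_Q: "sqrt (Qpoly \<alpha> a) = (l + m) * d^3 / 2"
    by simp
  have "Wratio \<alpha> a = ((m - l) * d^3 / 2) / ((l + m) * d^3 / 2)"
    unfolding Wratio_def N_eq sqrt_Q ..
  also have "\<dots> = (m - l) / (l + m)"
    using \<open>0 < d\<close> by simp
  finally show "Wratio \<alpha> a = (m - l) / (l + m)" .
qed

lemma ratios_inj_on_triangle:
  assumes "-1 < \<alpha>" "\<alpha> < a" "a < 1" "-1 < \<beta>" "\<beta> < b" "b < 1"
    and "Uratio \<alpha> a = Uratio \<beta> b" "Wratio \<alpha> a = Wratio \<beta> b"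
  shows "\<alpha> = \<beta> \<and> a = b"
proof -
  have separate: "Uratio \<alpha> a \<noteq> Uratio \<beta> b \<or> Wratio \<alpha> a \<noteq> Wratio \<beta> b"
    if "-1 < \<alpha>" "\<alpha> < a" "a < 1" "-1 < \<beta>" "\<beta> < b" "b < 1" "\<alpha> < \<beta>" for \<alpha> a \<beta> b
  proof (cases "b \<le> a")
    case True
    have "Uratio \<alpha> a < Uratio \<beta> a"
      using Uratio_strict_mono_first that True by simp
    also have "\<dots> \<le> Uratio \<beta> b"
      using Uratio_strict_antimono_second[of \<beta> b a] that True by (cases "b = a") auto
    finally show ?thesis
      by simp
  next
    case False
    have "Wratio \<alpha> a < Wratio \<alpha> b"
      using Wratio_strict_mono_second that False by simp
    also have "\<dots> < Wratio \<beta> b"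
      using Wratio_strict_mono_first that by simp
    finally show ?thesis
      by simp
  qed
  have "\<alpha> = \<beta>"
    using separate[of \<alpha> a \<beta> b] separate[of \<beta> b \<alpha> a] assms by (cases \<alpha> \<beta> rule: linorder_cases) auto
  moreover have "a = b"
    using Uratio_strict_antimono_second[of \<alpha> a b] Uratio_strict_antimono_second[of \<alpha> b a]
      assms \<open>\<alpha> = \<beta>\<close> by (cases a b rule: linorder_cases) auto
  ultimately show ?thesis ..
qed

theorem corollary4p4:
  fixes l m :: real  (* lambda, mu *)
  assumes "l > 1" and "m > 1"
  shows "\<forall>\<alpha> a \<beta> b. (-1 < \<alpha> \<and> \<alpha> < a \<and> a < 1 \<and> sys4p4 l m \<alpha> a) \<and>
                      (-1 < \<beta> \<and> \<beta> < b \<and> b < 1 \<and> sys4p4 l m \<beta> b)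
                      \<longrightarrow> \<alpha> = \<beta> \<and> a = b"
proof (intro allI impI)
  fix \<alpha> a \<beta> b :: real
  assume sol: "(-1 < \<alpha> \<and> \<alpha> < a \<and> a < 1 \<and> sys4p4 l m \<alpha> a) \<and>
               (-1 < \<beta> \<and> \<beta> < b \<and> b < 1 \<and> sys4p4 l m \<beta> b)"
  have "0 < l + m"
    using assms by simp
  with sol have "Uratio \<alpha> a = Uratio \<beta> b" and "Wratio \<alpha> a = Wratio \<beta> b"
    using sys4p4_imp_ratios[of l m \<alpha> a] sys4p4_imp_ratios[of l m \<beta> b] by simp_all
  with sol show "\<alpha> = \<beta> \<and> a = b"
    by (intro ratios_inj_on_triangle) simp_all
qed

end
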